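(* Let $\epsilon>0$, let $(\epsilon_k)_{k\in\mathbb N}$ be positive numbers with $\sum_{k=1}^\infty\epsilon_k<\epsilon$, let $(j_k)_{k\in\mathbb N}$ be a strictly increasing sequence of even natural numbers, and let $(x_k)_{k\in\mathbb N}$ be a block sequence in $\mathfrak X_0$ such that (i) $\|x_k\|_{W_0}=1$ for all $k$; (ii) $\frac{|\operatorname{supp}x_k|}{m_{j_k}}<\epsilon_k$ for all $k$; (iii) $\|x_{k+1}\|_{G_0}\le\frac{\epsilon_k}{n_{j_k}}$ for all $k$. Then $(x_k)_{k\in\mathbb N}$ is $(1+\epsilon)$-equivalent to the unit vector basis of $c_0$, i.e. $\max_i|a_i|\le\|\sum_{i=1}^n a_ix_i\|_{W_0}\le(1+\epsilon)\max_i|a_i|$ for all $n$ and all real $a_1,\dots,a_n$.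
   Context: All spaces are real. Let $c_{00}(\mathbb N)$ be the space of finitely supported real sequences, $(e_n)$ its unit vector basis and $e_n^*$ the coordinate functionals (elements of $c_{00}(\mathbb N)$ act on each other via the usual inner product). For $x\in c_{00}(\mathbb N)$, $\operatorname{supp}x=\{n:x(n)\ne0\}$ and $\operatorname{ran}x$ is the smallest interval of $\mathbb N$ containing $\operatorname{supp}x$; for nonzero $x,y$ write $x<y$ if $\max\operatorname{ran}x<\min\operatorname{ran}y$. For an interval $E\subset\mathbb N$, $Ef=f\cdot\chi_E$. A block sequence is a sequence $x_1<x_2<\cdots$ of nonzero finitely supported vectors. Put $m_1=2^8$, $m_{j+1}=m_j^5$, $n_1=2^7$, $n_{j+1}=(2n_j)^{s_{j+1}}$ with $s_{j+1}=\log_2(m_{j+1}^4)$. $G_0$ is the smallest subset of $c_{00}(\mathbb N)$ such that: (1) it contains all $e_n^*$; (2) it is symmetric; (3) for every $j\in\mathbb N$, every $d\le n_{2j}$ and every $f_1<\dots<f_d$ in $G_0$, it contains $\frac1{m_{2j}}\sum_{i=1}^d f_i$; (4) it contains $\sum_{i=1}^d a_if_i$ whenever $d\in\mathbb N$, $a_i\in\mathbb Q$, $\sum a_i^2\le1$, and $f_i\in G_0$ have pairwise different weights. An $f\in G_0$ has weight $w(f)=m_{2j}$ (and is called a functional with weight) if $f=\frac1{m_{2j}}\sum_{i=1}^d f_i$ for some $d\le n_{2j}$ and $f_1<\dots<f_d$ in $G_0$. Fix disjoint infinite sets $\Omega_1,\Omega_2\subset\mathbb N$, let $Q_s$ be the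 (countable) set of finite sequences $(f_1,\dots,f_d)$ of nonzero elements of $G_0$ with $f_1<\dots<f_d$, and fix an injection $\sigma:Q_s\to\{2j:j\in\Omega_2\}$ with $m_{\sigma(f_1,\dots,f_d)}>\max\{1/|f_i(e_l)|:i\le d,\ l\in\operatorname{supp}f_i\}\cdot\max\operatorname{supp}f_d$. A $\sigma$-$n_{2j+1}$ special sequence is an element $(f_1,\dots,f_{n_{2j+1}})$ of $Q_s$ such that each $f_i$ is a functional with weight, $w(f_1)=m_{2j_1}$ with $j_1\in\Omega_1$ and $n_{2j+1}^2<m_{2j_1}$, and $w(f_{i+1})=m_{\sigma(f_1,\dots,f_i)}$ for $1\le i<n_{2j+1}$. $W_0=G_0\cup\{\varepsilon E(\frac1{m_{2j+1}}\sum_{i=1}^{n_{2j+1}}f_i):|\varepsilon|=1,\ E\text{ a finite interval of }\mathbb N,\ (f_i)\text{ a }\sigma\text{-}n_{2j+1}\text{ special sequence}\}$. For $x\in c_{00}(\mathbb N)$ let $\|x\|_{G_0}=\sup_{f\in G_0}|f(x)|$ and $\|x\|_{W_0}=\sup_{f\in W_0}|f(x)|$; $\mathfrak{X}_{G_0}$ and $\mathfrak{X}_0$ are the completions of $c_{00}(\mathbb N)$ under these norms. *)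

theory Defs
  imports Complex_Main
begin

section \<open>Parameters m_j, n_j, s_j (indices j \<ge> 1; value at 0 is a dummy)\<close>

fun mm :: "nat \<Rightarrow> nat" where
  "mm 0 = 1"
| "mm (Suc 0) = 2^8"
| "mm (Suc (Suc j)) = (mm (Suc j))^5"

definition s_exp :: "nat \<Rightarrow> nat" where
  "s_exp j = nat \<lfloor>log 2 (real (mm j ^ 4))\<rfloor>"

fun nn :: "nat \<Rightarrow> nat" where
  "nn 0 = 1"
| "nn (Suc 0) = 2^7"
| "nn (Suc (Suc j)) = (2 * nn (Suc j)) ^ (s_exp (Suc (Suc j)))"

definition supp :: "(nat \<Rightarrow> real) \<Rightarrow> nat set" where
  "supp f = {l. f l \<noteq> 0}"

definition blk :: "(nat \<Rightarrow> real) \<Rightarrow> (nat \<Rightarrow> real) \<Rightarrow> bool" where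
  "blk x y \<longleftrightarrow> x \<noteq> (\<lambda>_. 0) \<and> y \<noteq> (\<lambda>_. 0) \<and> (\<forall>a\<in>supp x. \<forall>b\<in>supp y. a < b)"

definition block_list :: "(nat \<Rightarrow> real) list \<Rightarrow> bool" where
  "block_list fs \<longleftrightarrow> (\<forall>f\<in>set fs. f \<noteq> (\<lambda>_. 0)) \<and> sorted_wrt blk fs"

definition wavg :: "nat \<Rightarrow> (nat \<Rightarrow> real) list \<Rightarrow> nat \<Rightarrow> real" where
  "wavg j gs = (\<lambda>l. (\<Sum>g\<leftarrow>gs. g l) / real (mm (2*j)))"

inductive_set G0 :: "(nat \<Rightarrow> real) set" where
  unit: "(\<lambda>l. if l = n then 1 else 0) \<in> G0"
| neg: "f \<in> G0 \<Longrightarrow> (\<lambda>l. - f l) \<in> G0"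
| avg: "\<lbrakk>1 \<le> j; 1 \<le> length gs; length gs \<le> nn (2*j); block_list gs;
         \<forall>g\<in>set gs. g \<in> G0\<rbrakk> \<Longrightarrow> wavg j gs \<in> G0"
| comb: "\<lbrakk>length as = length fs; 1 \<le> length fs; \<forall>a\<in>set as. a \<in> \<rat>;
          (\<Sum>a\<leftarrow>as. a^2) \<le> 1; length js = length fs;
          distinct (map (\<lambda>j. mm (2*j)) js);
          \<forall>i<length fs. 1 \<le> js!i \<and> (\<exists>gs. 1 \<le> length gs \<and> length gs \<le> nn (2*(js!i))
             \<and> block_list gs \<and> (\<forall>g\<in>set gs. g \<in> G0) \<and> fs!i = wavg (js!i) gs)\<rbrakk>
         \<Longrightarrow> (\<lambda>l. \<Sum>i<length fs. as!i * (fs!i) l) \<in> G0"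

definition has_weight :: "(nat \<Rightarrow> real) \<Rightarrow> nat \<Rightarrow> bool" where
  "has_weight f w \<longleftrightarrow> (\<exists>j\<ge>1. w = mm (2*j) \<and> (\<exists>gs. 1 \<le> length gs \<and> length gs \<le> nn (2*j)
       \<and> block_list gs \<and> (\<forall>g\<in>set gs. g \<in> G0) \<and> f = wavg j gs))"

definition Qs :: "(nat \<Rightarrow> real) list set" where
  "Qs = {fs. 1 \<le> length fs \<and> (\<forall>f\<in>set fs. f \<in> G0 \<and> f \<noteq> (\<lambda>_. 0)) \<and> block_list fs}"

definition sigma_ok :: "nat set \<Rightarrow> ((nat \<Rightarrow> real) list \<Rightarrow> nat) \<Rightarrow> bool" where
  "sigma_ok \<Omega>2 \<sigma> \<longleftrightarrow> inj_on \<sigma> Qs \<and>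
     (\<forall>fs\<in>Qs. \<sigma> fs \<in> {2*j | j. j \<in> \<Omega>2} \<and>
        real (mm (\<sigma> fs)) > Max {1 / \<bar>f l\<bar> | f l. f \<in> set fs \<and> l \<in> supp f}
                              * real (Max (supp (last fs))))"

definition special :: "nat set \<Rightarrow> ((nat \<Rightarrow> real) list \<Rightarrow> nat) \<Rightarrow> nat \<Rightarrow> (nat \<Rightarrow> real) list \<Rightarrow> bool" where
  "special \<Omega>1 \<sigma> j fs \<longleftrightarrow> fs \<in> Qs \<and> length fs = nn (2*j+1) \<and>
     (\<forall>f\<in>set fs. \<exists>w. has_weight f w) \<and>
     (\<exists>j1\<in>\<Omega>1. has_weight (fs!0) (mm (2*j1)) \<and> (nn (2*j+1))^2 < mm (2*j1)) \<and>
     (\<forall>i. 1 \<le> i \<and> i < length fs \<longrightarrow> has_weight (fs!i) (mm (\<sigma> (take i fs))))"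

definition W0 :: "nat set \<Rightarrow> ((nat \<Rightarrow> real) list \<Rightarrow> nat) \<Rightarrow> (nat \<Rightarrow> real) set" where
  "W0 \<Omega>1 \<sigma> = G0 \<union>
     {(\<lambda>l. \<epsilon> * (if l \<in> {a..b} then (\<Sum>f\<leftarrow>fs. f l) / real (mm (2*j+1)) else 0))
       | \<epsilon> a b j fs. \<bar>\<epsilon>\<bar> = 1 \<and> 1 \<le> j \<and> special \<Omega>1 \<sigma> j fs}"

definition ip :: "(nat \<Rightarrow> real) \<Rightarrow> (nat \<Rightarrow> real) \<Rightarrow> real" where
  "ip f x = (\<Sum>l\<in>supp x. f l * x l)"

definition normG :: "(nat \<Rightarrow> real) \<Rightarrow> real" where
  "normG x = Sup ((\<lambda>f. \<bar>ip f x\<bar>) ` G0)"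

definition normW :: "nat set \<Rightarrow> ((nat \<Rightarrow> real) list \<Rightarrow> nat) \<Rightarrow> (nat \<Rightarrow> real) \<Rightarrow> real" where
  "normW \<Omega>1 \<sigma> x = Sup ((\<lambda>f. \<bar>ip f x\<bar>) ` W0 \<Omega>1 \<sigma>)"

end

theory Submission
  imports Defs
begin

text \<open>
  For the lower bound, restrict a norming functional \<open>f\<close> to the range of \<open>x\<^sub>i\<close>: the restriction
  is again zero or an element of \<open>W\<^sub>0\<close>, and on \<open>\<Sum> a\<^sub>k x\<^sub>k\<close> it only sees \<open>a\<^sub>i f(x\<^sub>i)\<close>, so
  \<open>|a\<^sub>i| = |a\<^sub>i| \<parallel>x\<^sub>i\<parallel> \<le> \<parallel>\<Sum> a\<^sub>k x\<^sub>k\<parallel>\<close>.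

  For the upper bound it suffices that \<open>\<Sum>\<^sub>i |f(x\<^sub>i)| \<le> 1 + \<Sum> \<epsilon>\<^sub>k\<close> for every \<open>f \<in> W\<^sub>0\<close>.
  If \<open>f \<in> G\<^sub>0\<close>, then \<open>|f(x\<^sub>k\<^sub>+\<^sub>1)| \<le> \<parallel>x\<^sub>k\<^sub>+\<^sub>1\<parallel>\<^sub>G\<^sub>0 \<le> \<epsilon>\<^sub>k\<close>. If \<open>f\<close> is a special functional
  of weight \<open>m\<^sub>2\<^sub>J\<^sub>+\<^sub>1\<close>, its entries are at most \<open>1/m\<^sub>2\<^sub>J\<^sub>+\<^sub>1\<close>, so \<open>|f(x\<^sub>i)| \<le> |supp x\<^sub>i|/m(j\<^sub>i) < \<epsilon>\<^sub>i\<close>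
  while \<open>j\<^sub>i \<le> 2J+1\<close>; and as a sum of \<open>n\<^sub>2\<^sub>J\<^sub>+\<^sub>1\<close> restricted elements of \<open>G\<^sub>0\<close> it satisfies
  \<open>|f(x\<^sub>k\<^sub>+\<^sub>1)| \<le> n\<^sub>2\<^sub>J\<^sub>+\<^sub>1 \<parallel>x\<^sub>k\<^sub>+\<^sub>1\<parallel>\<^sub>G\<^sub>0 \<le> \<epsilon>\<^sub>k\<close> once \<open>j\<^sub>k > 2J+1\<close>. Only the first \<open>x\<^sub>t\<close> with
  \<open>j\<^sub>t > 2J+1\<close> escapes both estimates, and it contributes at most \<open>\<parallel>x\<^sub>t\<parallel> = 1\<close>.
  Neither estimate uses the parity of \<open>j\<^sub>k\<close>.
\<close>

section \<open>Growth of the parameters\<close>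

lemma mm_ge_two_power: "2 ^ k \<le> mm k"
proof (induction k rule: mm.induct)
  case (3 j)
  have "(2::nat) ^ Suc (Suc j) \<le> 2 ^ (5 * Suc j)" by (rule power_increasing) auto
  also have "\<dots> = (2 ^ Suc j) ^ 5" by (metis power_mult mult.commute)
  also have "\<dots> \<le> mm (Suc j) ^ 5" using 3 by (rule power_mono) simp
  finally show ?case by simp
qed simp_all

lemma mm_pos: "1 \<le> mm k"
  using mm_ge_two_power[of k] one_le_power[of "2::nat" k] by linarith

lemma mm_le_Suc: "mm k \<le> mm (Suc k)"
proof (cases k)
  case (Suc i)
  have "mm k \<le> mm k ^ 5" using mm_pos[of k] by (simp add: self_le_power)
  then show ?thesis using Suc by (simp del: mm.simps(2))
qed simp

lemma mm_mono: "a \<le> b \<Longrightarrow> mm a \<le> mm b"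
  by (rule lift_Suc_mono_le[of mm]) (rule mm_le_Suc)

lemma s_exp_pos: "1 \<le> s_exp (Suc k)"
proof -
  have "(2::nat) \<le> 2 ^ Suc k" by (simp add: self_le_power)
  also have "\<dots> \<le> mm (Suc k)" by (rule mm_ge_two_power)
  finally have "2 \<le> mm (Suc k) ^ 4"
    by (metis le_trans self_le_power mm_pos zero_less_numeral)
  then have "(2::real) \<le> real (mm (Suc k) ^ 4)"
    by (metis of_nat_le_iff of_nat_numeral)
  moreover have "1 \<le> log 2 y" if "2 \<le> y" for y :: real
    using that by (subst le_log_iff) auto
  ultimately have "1 \<le> log 2 (real (mm (Suc k) ^ 4))" by blast
  then show ?thesis unfolding s_exp_def by linarith
qed

lemma nn_pos: "1 \<le> nn k"
  by (induction k rule: nn.induct) (simp_all add: s_exp_pos)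

lemma nn_le_Suc: "nn k \<le> nn (Suc k)"
proof (cases k)
  case (Suc i)
  have "nn k \<le> 2 * nn k" by simp
  also have "\<dots> \<le> (2 * nn k) ^ s_exp (Suc k)"
    using s_exp_pos[of k] nn_pos[of k] by (intro self_le_power) auto
  finally show ?thesis using Suc by (simp del: nn.simps(2))
qed simp

lemma nn_mono: "a \<le> b \<Longrightarrow> nn a \<le> nn b"
  by (rule lift_Suc_mono_le[of nn]) (rule nn_le_Suc)

section \<open>Entries of norming functionals\<close>

lemma blk_disjoint: "blk g h \<Longrightarrow> g l \<noteq> 0 \<Longrightarrow> h l = 0"
  unfolding blk_def supp_def by auto

lemma abs_sum_list_blk_le:
  assumes "sorted_wrt blk gs" "0 \<le> B" "\<forall>g\<in>set gs. \<bar>g l\<bar> \<le> B"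
  shows "\<bar>\<Sum>g\<leftarrow>gs. g l\<bar> \<le> B"
  using assms
proof (induction gs)
  case (Cons g gs)
  show ?case
  proof (cases "g l = 0")
    case False
    then have "\<forall>h\<in>set gs. h l = 0" using Cons.prems(1) blk_disjoint by auto
    then have "(\<Sum>h\<leftarrow>gs. h l) = (\<Sum>h\<leftarrow>gs. 0)"
      by (intro arg_cong[where f = sum_list] map_cong) auto
    then show ?thesis using Cons.prems by simp
  qed (use Cons in simp)
qed simp

lemma abs_wavg_le:
  assumes "block_list gs" "\<forall>g\<in>set gs. \<bar>g l\<bar> \<le> 1"
  shows "\<bar>wavg j gs l\<bar> \<le> 1 / real (mm (2*j))"
proof -
  have "\<bar>\<Sum>g\<leftarrow>gs. g l\<bar> \<le> 1"
    using assms abs_sum_list_blk_le[of gs 1 l] unfolding block_list_def by auto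
  moreover have "1 \<le> real (mm (2*j))" using mm_pos by simp
  ultimately show ?thesis unfolding wavg_def by (simp add: abs_div divide_right_mono)
qed

lemma sum_half_powers_le_one:
  assumes "finite S" "0 \<notin> S"
  shows "(\<Sum>j\<in>S. (1/2::real) ^ j) \<le> 1"
proof -
  have half_geometric: "(\<Sum>j\<in>{1..N}. (1/2::real) ^ j) = 1 - (1/2) ^ N" for N
    by (induction N) (auto simp: atLeastAtMostSuc_conv)
  have "S \<subseteq> {1..Max (insert 0 S)}" using assms by (auto simp: Suc_le_eq intro!: gr0I)
  then have "(\<Sum>j\<in>S. (1/2::real) ^ j) \<le> (\<Sum>j\<in>{1..Max (insert 0 S)}. (1/2) ^ j)"
    by (intro sum_mono2) auto
  moreover have "0 \<le> (1/2::real) ^ Max (insert 0 S)" by simp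
  ultimately show ?thesis unfolding half_geometric by linarith
qed

text \<open>The components of a combination have pairwise different weights, so their entries are
  bounded by distinct terms \<open>1/m\<^sub>2\<^sub>j \<le> 2\<^sup>-\<^sup>j\<close>.\<close>
lemma abs_G0_le_one: "g \<in> G0 \<Longrightarrow> \<bar>g l\<bar> \<le> 1"
proof (induction g rule: G0.induct)
  case (avg j gs)
  then have "\<bar>wavg j gs l\<bar> \<le> 1 / real (mm (2*j))" using abs_wavg_le by auto
  also have "\<dots> \<le> 1" using mm_pos[of "2*j"] by simp
  finally show ?case .
next
  case (comb as fs js)
  have component_le: "\<bar>as!i * (fs!i) l\<bar> \<le> (1/2) ^ (js!i)" if i: "i < length fs" for i
  proof -
    obtain gs where gs: "block_list gs" "\<forall>g\<in>set gs. \<bar>g l\<bar> \<le> 1" "fs!i = wavg (js!i) gs"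
      using comb(7) i by blast
    have "(2::real) ^ (js!i) \<le> 2 ^ (2 * js!i)" by (rule power_increasing) auto
    also have "\<dots> \<le> real (mm (2 * js!i))"
      by (metis mm_ge_two_power of_nat_le_iff of_nat_numeral of_nat_power)
    finally have "1 / real (mm (2 * js!i)) \<le> (1/2) ^ (js!i)"
      by (simp add: power_one_over frac_le)
    moreover have "\<bar>(fs!i) l\<bar> \<le> 1 / real (mm (2 * js!i))" using gs abs_wavg_le by simp
    ultimately have fs_le: "\<bar>(fs!i) l\<bar> \<le> (1/2) ^ (js!i)" by linarith
    have "(as!i)\<^sup>2 \<le> 1"
      using member_le_sum_list[of "(as!i)\<^sup>2" "map power2 as"] comb(1,4) i by fastforce
    then have "\<bar>as!i\<bar> \<le> 1" by (simp add: abs_square_le_1)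
    then show ?thesis using fs_le
      by (simp add: abs_mult mult_le_one order_trans[OF mult_right_mono[of "\<bar>as!i\<bar>" 1]])
  qed
  have "\<bar>\<Sum>i<length fs. as!i * (fs!i) l\<bar> \<le> (\<Sum>i<length fs. (1/2::real) ^ (js!i))"
    using component_le by (intro order_trans[OF sum_abs sum_mono]) auto
  also have "\<dots> = (\<Sum>j\<leftarrow>js. (1/2) ^ j)"
    using comb(5) by (simp add: sum_list_sum_nth atLeast0LessThan)
  also have "\<dots> = (\<Sum>j\<in>set js. (1/2) ^ j)"
    using comb(6) by (simp add: distinct_map sum_list_distinct_conv_sum_set)
  also have "\<dots> \<le> 1" using comb(5,7) by (intro sum_half_powers_le_one) (auto simp: in_set_conv_nth)
  finally show ?case .
qed simp_all

section \<open>Restriction to intervals\<close>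

definition interval_restr :: "nat \<Rightarrow> nat \<Rightarrow> (nat \<Rightarrow> real) \<Rightarrow> nat \<Rightarrow> real" where
  "interval_restr a b g = (\<lambda>l. if l \<in> {a..b} then g l else 0)"

definition weighted_functional :: "nat \<Rightarrow> (nat \<Rightarrow> real) \<Rightarrow> bool" where
  "weighted_functional j f \<longleftrightarrow> 1 \<le> j \<and> (\<exists>gs. 1 \<le> length gs \<and> length gs \<le> nn (2*j) \<and> block_list gs
      \<and> (\<forall>g\<in>set gs. g \<in> G0) \<and> f = wavg j gs)"

definition admissible_comb :: "real list \<Rightarrow> (nat \<Rightarrow> real) list \<Rightarrow> nat list \<Rightarrow> bool" where
  "admissible_comb as fs js \<longleftrightarrow> length as = length fs \<and> 1 \<le> length fs \<and> (\<forall>a\<in>set as. a \<in> \<rat>)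
      \<and> (\<Sum>a\<leftarrow>as. a\<^sup>2) \<le> 1 \<and> length js = length fs \<and> distinct (map (\<lambda>j. mm (2*j)) js)
      \<and> (\<forall>i<length fs. weighted_functional (js!i) (fs!i))"

lemma admissible_comb_in_G0:
  "admissible_comb as fs js \<Longrightarrow> (\<lambda>l. \<Sum>i<length fs. as!i * (fs!i) l) \<in> G0"
  unfolding admissible_comb_def weighted_functional_def by (intro G0.comb) auto

lemma admissible_comb_sublist:
  assumes "admissible_comb as fs js" "idx \<noteq> []" "distinct idx"
    and idx: "\<forall>k\<in>set idx. k < length fs \<and> weighted_functional (js!k) (F k)"
  shows "admissible_comb (map ((!) as) idx) (map F idx) (map ((!) js) idx)"
proof -
  have "(\<Sum>a\<leftarrow>map ((!) as) idx. a\<^sup>2) = (\<Sum>k\<in>set idx. (as!k)\<^sup>2)"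
    using assms(3) by (simp add: sum_list_distinct_conv_sum_set o_def)
  also have "\<dots> \<le> (\<Sum>k<length fs. (as!k)\<^sup>2)"
    using idx by (intro sum_mono2) auto
  also have "\<dots> = (\<Sum>a\<leftarrow>as. a\<^sup>2)"
    using assms(1) by (simp add: admissible_comb_def sum_list_sum_nth atLeast0LessThan)
  finally have squares: "(\<Sum>a\<leftarrow>map ((!) as) idx. a\<^sup>2) \<le> 1"
    using assms(1) unfolding admissible_comb_def by linarith
  have "inj_on ((\<lambda>j. mm (2*j)) \<circ> (!) js) (set idx)"
  proof (rule inj_onI)
    fix k k' assume "k \<in> set idx" "k' \<in> set idx" "((\<lambda>j. mm (2*j)) \<circ> (!) js) k = ((\<lambda>j. mm (2*j)) \<circ> (!) js) k'"
    then show "k = k'"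
      using assms(1) idx unfolding admissible_comb_def distinct_conv_nth by (metis comp_apply length_map nth_map)
  qed
  then have "distinct (map (\<lambda>j. mm (2*j)) (map ((!) js) idx))"
    using assms(3) by (simp add: distinct_map)
  then show ?thesis
    using assms squares unfolding admissible_comb_def by (auto simp: Suc_le_eq)
qed

lemma sum_nth_filter_upt:
  assumes "\<forall>k<n. \<not> P k \<longrightarrow> h k = 0"
  shows "(\<Sum>i<length (filter P [0..<n]). h (filter P [0..<n] ! i)) = (\<Sum>k<n. h k)"
proof -
  have "(\<Sum>i<length (filter P [0..<n]). h (filter P [0..<n] ! i)) = (\<Sum>k\<leftarrow>filter P [0..<n]. h k)"
    by (simp add: sum_list_sum_nth atLeast0LessThan)
  also have "\<dots> = (\<Sum>k\<in>set (filter P [0..<n]). h k)"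
    by (rule sum_list_distinct_conv_sum_set) simp
  also have "\<dots> = (\<Sum>k<n. h k)"
    by (rule sum.mono_neutral_left) (use assms in auto)
  finally show ?thesis .
qed

lemma sum_list_interval_restr:
  "(\<Sum>g\<leftarrow>gs. interval_restr a b g l) = (if l \<in> {a..b} then (\<Sum>g\<leftarrow>gs. g l) else 0)"
  by (induction gs) (auto simp: interval_restr_def)

lemma interval_restr_wavg:
  "interval_restr a b (wavg j gs) = wavg j (filter (\<lambda>g. g \<noteq> (\<lambda>_. 0)) (map (interval_restr a b) gs))"
proof -
  have "(\<Sum>g\<leftarrow>filter (\<lambda>g. g \<noteq> (\<lambda>_. 0)) hs. g l) = (\<Sum>g\<leftarrow>hs. g l)" for hs :: "(nat \<Rightarrow> real) list" and l
    by (induction hs) auto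
  then show ?thesis
    by (simp add: fun_eq_iff wavg_def o_def sum_list_interval_restr) (simp add: interval_restr_def)
qed

lemma block_list_interval_restr:
  assumes "block_list gs"
  shows "block_list (filter (\<lambda>g. g \<noteq> (\<lambda>_. 0)) (map (interval_restr a b) gs))"
proof -
  let ?R = "\<lambda>g h. g \<noteq> (\<lambda>_. 0) \<longrightarrow> h \<noteq> (\<lambda>_. 0) \<longrightarrow> blk g h"
  have "l \<in> supp g" if "l \<in> supp (interval_restr a b g)" for g l
    using that unfolding supp_def interval_restr_def by (auto split: if_splits)
  then have "sorted_wrt ?R (map (interval_restr a b) gs)"
    using assms unfolding block_list_def
    by (intro sorted_wrt_map_mono[of blk]) (auto simp: blk_def)
  then have "sorted_wrt ?R (filter (\<lambda>g. g \<noteq> (\<lambda>_. 0)) (map (interval_restr a b) gs))"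
    by (rule sorted_wrt_filter)
  then show ?thesis
    unfolding block_list_def by (auto elim: sorted_wrt_mono_rel[rotated])
qed

lemma weighted_functional_interval_restr:
  assumes "1 \<le> j" "length gs \<le> nn (2*j)" "block_list gs"
    and "\<forall>g\<in>set gs. interval_restr a b g = (\<lambda>_. 0) \<or> interval_restr a b g \<in> G0"
    and "interval_restr a b (wavg j gs) \<noteq> (\<lambda>_. 0)"
  shows "weighted_functional j (interval_restr a b (wavg j gs))"
  unfolding weighted_functional_def
proof (intro conjI exI)
  let ?gs = "filter (\<lambda>g. g \<noteq> (\<lambda>_. 0)) (map (interval_restr a b) gs)"
  show restr_eq: "interval_restr a b (wavg j gs) = wavg j ?gs" by (rule interval_restr_wavg)
  have "wavg j ?gs \<noteq> (\<lambda>_. 0)" using assms(5) restr_eq by simp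
  then show "1 \<le> length ?gs" by (cases ?gs) (auto simp: wavg_def)
  show "length ?gs \<le> nn (2*j)"
    by (metis assms(2) length_filter_le length_map order_trans)
qed (use assms block_list_interval_restr in auto)

lemma interval_restr_G0: "g \<in> G0 \<Longrightarrow> interval_restr a b g = (\<lambda>_. 0) \<or> interval_restr a b g \<in> G0"
proof (induction g rule: G0.induct)
  case (unit n)
  have "interval_restr a b (\<lambda>l. if l = n then 1 else 0)
      = (if n \<in> {a..b} then (\<lambda>l. if l = n then 1 else 0) else (\<lambda>_. 0))"
    by (auto simp: interval_restr_def fun_eq_iff)
  then show ?case using G0.unit[of n] by simp
next
  case (neg f)
  have "interval_restr a b (\<lambda>l. - f l) = (\<lambda>l. - interval_restr a b f l)"
    by (auto simp: interval_restr_def)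
  then show ?case using neg G0.neg by (auto simp: fun_eq_iff)
next
  case (avg j gs)
  then show ?case
    using weighted_functional_interval_restr[of j gs a b] G0.avg
    unfolding weighted_functional_def by metis
next
  case (comb as fs js)
  txt \<open>Vanishing restrictions must be dropped, since a functional with weight is never zero.\<close>
  define F where "F i = interval_restr a b (fs!i)" for i
  define idx where "idx = filter (\<lambda>i. F i \<noteq> (\<lambda>_. 0)) [0..<length fs]"
  have "interval_restr a b (\<lambda>l. \<Sum>i<length fs. as!i * (fs!i) l) = (\<lambda>l. \<Sum>k<length fs. as!k * F k l)"
    by (auto simp: interval_restr_def F_def fun_eq_iff)
  also have "\<dots> = (\<lambda>l. \<Sum>i<length idx. as!(idx!i) * F (idx!i) l)"
    unfolding idx_def by (subst sum_nth_filter_upt) auto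
  finally have restr_eq: "interval_restr a b (\<lambda>l. \<Sum>i<length fs. as!i * (fs!i) l)
      = (\<lambda>l. \<Sum>i<length (map F idx). map ((!) as) idx ! i * (map F idx ! i) l)" by simp
  have "admissible_comb as fs js"
    using comb(1-7) unfolding admissible_comb_def weighted_functional_def by blast
  moreover have "weighted_functional (js!k) (F k)" if "k < length fs" "F k \<noteq> (\<lambda>_. 0)" for k
    using comb(7) that weighted_functional_interval_restr[of "js!k" _ a b] unfolding F_def by metis
  ultimately have "idx \<noteq> [] \<Longrightarrow> admissible_comb (map ((!) as) idx) (map F idx) (map ((!) js) idx)"
    by (intro admissible_comb_sublist) (auto simp: idx_def)
  then show ?case
    unfolding restr_eq using admissible_comb_in_G0 by (cases "idx = []") (simp, blast)
qed

definition special_functional :: "real \<Rightarrow> nat \<Rightarrow> nat \<Rightarrow> nat \<Rightarrow> (nat \<Rightarrow> real) list \<Rightarrow> nat \<Rightarrow> real" where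
  "special_functional \<epsilon> a b J fs = (\<lambda>l. \<epsilon> * (if l \<in> {a..b} then (\<Sum>f\<leftarrow>fs. f l) / real (mm (2*J+1)) else 0))"

lemma W0_cases:
  assumes "f \<in> W0 \<Omega>1 \<sigma>"
  obtains "f \<in> G0"
  | \<epsilon> a b J fs where "f = special_functional \<epsilon> a b J fs" "\<bar>\<epsilon>\<bar> = 1" "1 \<le> J" "special \<Omega>1 \<sigma> J fs"
  using assms unfolding W0_def special_functional_def by blast

lemma special_functional_in_W0:
  "\<bar>\<epsilon>\<bar> = 1 \<Longrightarrow> 1 \<le> J \<Longrightarrow> special \<Omega>1 \<sigma> J fs \<Longrightarrow> special_functional \<epsilon> a b J fs \<in> W0 \<Omega>1 \<sigma>"
  unfolding W0_def special_functional_def by blast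

lemma G0_subset_W0: "G0 \<subseteq> W0 \<Omega>1 \<sigma>"
  unfolding W0_def by auto

lemma specialD:
  assumes "special \<Omega>1 \<sigma> J fs"
  shows "block_list fs" "\<forall>f\<in>set fs. f \<in> G0" "length fs = nn (2*J+1)"
  using assms unfolding special_def Qs_def by auto

lemma abs_special_functional_le:
  assumes "special \<Omega>1 \<sigma> J fs" "\<bar>\<epsilon>\<bar> = 1"
  shows "\<bar>special_functional \<epsilon> a b J fs l\<bar> \<le> 1 / real (mm (2*J+1))"
proof -
  have "\<bar>\<Sum>f\<leftarrow>fs. f l\<bar> \<le> 1"
    using abs_sum_list_blk_le[of fs 1 l] specialD[OF assms(1)] abs_G0_le_one
    unfolding block_list_def by auto
  moreover have "1 \<le> real (mm (2*J+1))" using mm_pos by simp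
  ultimately show ?thesis
    unfolding special_functional_def using assms(2) by (simp add: abs_mult abs_div divide_right_mono)
qed

lemma abs_W0_le_one: "f \<in> W0 \<Omega>1 \<sigma> \<Longrightarrow> \<bar>f l\<bar> \<le> 1"
proof (erule W0_cases)
  fix \<epsilon> a b J fs assume "f = special_functional \<epsilon> a b J fs" "\<bar>\<epsilon>\<bar> = 1" "special \<Omega>1 \<sigma> J fs"
  then have "\<bar>f l\<bar> \<le> 1 / real (mm (2*J+1))" using abs_special_functional_le by blast
  also have "\<dots> \<le> 1" using mm_pos[of "2*J+1"] by simp
  finally show ?thesis .
qed (rule abs_G0_le_one)

lemma interval_restr_W0:
  assumes "f \<in> W0 \<Omega>1 \<sigma>"
  shows "interval_restr c d f = (\<lambda>_. 0) \<or> interval_restr c d f \<in> W0 \<Omega>1 \<sigma>"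
  using assms
proof (cases rule: W0_cases)
  case (2 \<epsilon> a b J fs)
  have "interval_restr c d f = special_functional \<epsilon> (max a c) (min b d) J fs"
    unfolding 2(1) interval_restr_def special_functional_def by (auto simp: fun_eq_iff)
  then show ?thesis using 2 special_functional_in_W0 by metis
qed (use interval_restr_G0 G0_subset_W0 in blast)

lemma ip_eq_sum_superset: "finite S \<Longrightarrow> supp x \<subseteq> S \<Longrightarrow> ip f x = (\<Sum>l\<in>S. f l * x l)"
  unfolding ip_def by (rule sum.mono_neutral_left) (auto simp: supp_def)

lemma supp_sum_subset: "supp (\<lambda>l. \<Sum>i\<le>n. a i * x i l) \<subseteq> (\<Union>i\<le>n. supp (x i))"
proof
  fix l assume "l \<in> supp (\<lambda>l. \<Sum>i\<le>n. a i * x i l)"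
  then have "(\<Sum>i\<le>n. a i * x i l) \<noteq> 0" by (simp add: supp_def)
  then obtain i where "i \<le> n" "x i l \<noteq> 0" using sum.neutral[of "{..n}" "\<lambda>i. a i * x i l"] by auto
  then show "l \<in> (\<Union>i\<le>n. supp (x i))" by (auto simp: supp_def)
qed

lemma ip_sum:
  fixes x :: "nat \<Rightarrow> nat \<Rightarrow> real"
  assumes "\<forall>i. finite (supp (x i))"
  shows "ip f (\<lambda>l. \<Sum>i\<le>n. a i * x i l) = (\<Sum>i\<le>n. a i * ip f (x i))"
proof -
  let ?S = "\<Union>i\<le>n. supp (x i)"
  have fin: "finite ?S" using assms by simp
  have "ip f (\<lambda>l. \<Sum>i\<le>n. a i * x i l) = (\<Sum>l\<in>?S. f l * (\<Sum>i\<le>n. a i * x i l))"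
    by (rule ip_eq_sum_superset[OF fin supp_sum_subset])
  also have "\<dots> = (\<Sum>i\<le>n. a i * (\<Sum>l\<in>?S. f l * x i l))"
    by (simp add: sum_distrib_left sum.swap[of _ ?S] mult.left_commute)
  also have "\<dots> = (\<Sum>i\<le>n. a i * ip f (x i))"
    using ip_eq_sum_superset[OF fin] by (intro sum.cong refl) (metis UN_upper)
  finally show ?thesis .
qed

lemma abs_ip_le:
  assumes "finite (supp x)" "\<forall>l. \<bar>f l\<bar> \<le> B"
  shows "\<bar>ip f x\<bar> \<le> B * (\<Sum>l\<in>supp x. \<bar>x l\<bar>)"
proof -
  have "\<bar>ip f x\<bar> \<le> (\<Sum>l\<in>supp x. \<bar>f l * x l\<bar>)"
    unfolding ip_def by (rule sum_abs)
  also have "\<dots> \<le> (\<Sum>l\<in>supp x. B * \<bar>x l\<bar>)"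
    using assms(2) by (intro sum_mono) (simp add: abs_mult mult_right_mono)
  finally show ?thesis by (simp add: sum_distrib_left)
qed

lemma bdd_above_abs_ip:
  assumes "finite (supp x)" "\<forall>f\<in>F. \<forall>l. \<bar>f l\<bar> \<le> 1"
  shows "bdd_above ((\<lambda>f. \<bar>ip f x\<bar>) ` F)"
  using abs_ip_le[OF assms(1)] assms(2)
  by (intro bdd_aboveI2[where M = "\<Sum>l\<in>supp x. \<bar>x l\<bar>"]) (metis mult_1)

lemma abs_ip_le_normW: "finite (supp x) \<Longrightarrow> f \<in> W0 \<Omega>1 \<sigma> \<Longrightarrow> \<bar>ip f x\<bar> \<le> normW \<Omega>1 \<sigma> x"
  unfolding normW_def by (rule cSUP_upper) (auto intro: bdd_above_abs_ip abs_W0_le_one)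

lemma abs_ip_le_normG: "finite (supp x) \<Longrightarrow> f \<in> G0 \<Longrightarrow> \<bar>ip f x\<bar> \<le> normG x"
  unfolding normG_def by (rule cSUP_upper) (auto intro: bdd_above_abs_ip abs_G0_le_one)

lemma normW_le: "(\<And>f. f \<in> W0 \<Omega>1 \<sigma> \<Longrightarrow> \<bar>ip f x\<bar> \<le> B) \<Longrightarrow> normW \<Omega>1 \<sigma> x \<le> B"
  unfolding normW_def by (rule cSUP_least) (use G0_subset_W0 G0.unit in blast)+

lemma normW_nonneg: "finite (supp x) \<Longrightarrow> 0 \<le> normW \<Omega>1 \<sigma> x"
  using abs_ip_le_normW G0_subset_W0 G0.unit by (meson abs_ge_zero order_trans subsetD)

lemma normG_nonneg: "finite (supp x) \<Longrightarrow> 0 \<le> normG x"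
  using abs_ip_le_normG G0.unit by (meson abs_ge_zero order_trans)

lemma abs_coord_le_normW:
  assumes "finite (supp x)"
  shows "\<bar>x n\<bar> \<le> normW \<Omega>1 \<sigma> x"
proof -
  have "ip (\<lambda>l. if l = n then 1 else 0) x = (\<Sum>l\<in>supp x. if l = n then x l else 0)"
    unfolding ip_def by (rule sum.cong) auto
  also have "\<dots> = x n" using assms by (simp add: supp_def)
  finally show ?thesis
    using abs_ip_le_normW[OF assms] G0_subset_W0 G0.unit by (metis subsetD)
qed

lemma ip_special_functional:
  "ip (special_functional \<epsilon> a b J fs) x
     = \<epsilon> / real (mm (2*J+1)) * (\<Sum>f\<leftarrow>fs. ip (interval_restr a b f) x)"
proof -
  have sum_list_swap: "(\<Sum>l\<in>S. \<Sum>f\<leftarrow>fs. h f l) = (\<Sum>f\<leftarrow>fs. \<Sum>l\<in>S. h f l)"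
    for S and h :: "(nat \<Rightarrow> real) \<Rightarrow> nat \<Rightarrow> real"
    by (induction fs) (auto simp: sum.distrib)
  define c where "c = \<epsilon> / real (mm (2*J+1))"
  have "special_functional \<epsilon> a b J fs = (\<lambda>l. c * (\<Sum>f\<leftarrow>fs. interval_restr a b f l))"
    unfolding c_def special_functional_def sum_list_interval_restr by auto
  then have "ip (special_functional \<epsilon> a b J fs) x
      = (\<Sum>l\<in>supp x. c * (\<Sum>f\<leftarrow>fs. interval_restr a b f l * x l))"
    unfolding ip_def by (simp add: sum_list_mult_const mult.assoc)
  also have "\<dots> = c * (\<Sum>l\<in>supp x. \<Sum>f\<leftarrow>fs. interval_restr a b f l * x l)"
    by (simp add: sum_distrib_left)
  also have "\<dots> = c * (\<Sum>f\<leftarrow>fs. ip (interval_restr a b f) x)"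
    unfolding ip_def sum_list_swap ..
  finally show ?thesis unfolding c_def .
qed

lemma abs_ip_special_le_card:
  assumes "special \<Omega>1 \<sigma> J fs" "\<bar>\<epsilon>\<bar> = 1" "finite (supp x)"
  shows "\<bar>ip (special_functional \<epsilon> a b J fs) x\<bar>
           \<le> real (card (supp x)) * normW \<Omega>1 \<sigma> x / real (mm (2*J+1))"
proof -
  have "\<bar>ip (special_functional \<epsilon> a b J fs) x\<bar> \<le> 1 / real (mm (2*J+1)) * (\<Sum>l\<in>supp x. \<bar>x l\<bar>)"
    using abs_ip_le[OF assms(3)] abs_special_functional_le[OF assms(1,2)] by blast
  also have "\<dots> \<le> 1 / real (mm (2*J+1)) * (\<Sum>l\<in>supp x. normW \<Omega>1 \<sigma> x)"
    using abs_coord_le_normW[OF assms(3)] by (intro mult_left_mono sum_mono) auto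
  finally show ?thesis by simp
qed

lemma abs_ip_special_le_normG:
  assumes "special \<Omega>1 \<sigma> J fs" "\<bar>\<epsilon>\<bar> = 1" "finite (supp x)"
  shows "\<bar>ip (special_functional \<epsilon> a b J fs) x\<bar> \<le> real (nn (2*J+1)) * normG x"
proof -
  let ?S = "\<Sum>f\<leftarrow>fs. ip (interval_restr a b f) x"
  have restr_le: "\<bar>ip (interval_restr a b f) x\<bar> \<le> normG x" if "f \<in> set fs" for f
    using interval_restr_G0[of f a b] specialD(2)[OF assms(1)] that
      abs_ip_le_normG[OF assms(3)] normG_nonneg[OF assms(3)] by (auto simp: ip_def)
  have "\<bar>ip (special_functional \<epsilon> a b J fs) x\<bar> = \<bar>?S\<bar> / real (mm (2*J+1))"
    unfolding ip_special_functional using assms(2) by (simp add: abs_mult)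
  also have "\<dots> \<le> \<bar>?S\<bar>"
    using divide_left_mono[of 1 "real (mm (2*J+1))" "\<bar>?S\<bar>"] mm_pos[of "2*J+1"] by simp
  also have "\<dots> \<le> (\<Sum>f\<leftarrow>fs. \<bar>ip (interval_restr a b f) x\<bar>)"
    using sum_list_abs[of "map (\<lambda>f. ip (interval_restr a b f) x) fs"] by (simp add: o_def)
  also have "\<dots> \<le> (\<Sum>f\<leftarrow>fs. normG x)"
    using restr_le by (rule sum_list_mono)
  also have "\<dots> = real (nn (2*J+1)) * normG x"
    using specialD(3)[OF assms(1)] by (simp add: sum_list_triv)
  finally show ?thesis .
qed

lemma blk_chain_less:
  assumes "\<forall>k. blk (x k) (x (Suc k))" "i < k" "p \<in> supp (x i)" "q \<in> supp (x k)"
  shows "p < q"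
  using assms(2-4)
proof (induction k arbitrary: q)
  case (Suc k)
  show ?case
  proof (cases "i = k")
    case False
    have "x k \<noteq> (\<lambda>_. 0)" using assms(1) unfolding blk_def by blast
    then obtain r where r: "r \<in> supp (x k)" unfolding supp_def by (auto simp: fun_eq_iff)
    have "p < r" using Suc False r by simp
    also have "r < q" using assms(1) Suc.prems(3) r unfolding blk_def by blast
    finally show ?thesis .
  qed (use assms(1) Suc.prems in \<open>unfold blk_def, blast\<close>)
qed simp

lemma abs_coeff_le_normW_block_sum:
  fixes x :: "nat \<Rightarrow> nat \<Rightarrow> real"
  assumes blocks: "\<forall>k. blk (x k) (x (Suc k))" and fin: "\<forall>k. finite (supp (x k))" and "i \<le> n"
  shows "\<bar>a i\<bar> * normW \<Omega>1 \<sigma> (x i) \<le> normW \<Omega>1 \<sigma> (\<lambda>l. \<Sum>i\<le>n. a i * x i l)"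
proof -
  define y where "y = (\<lambda>l. \<Sum>i\<le>n. a i * x i l)"
  have fin_y: "finite (supp y)"
    unfolding y_def using fin by (intro finite_subset[OF supp_sum_subset]) auto
  have "x i \<noteq> (\<lambda>_. 0)" using blocks unfolding blk_def by blast
  then have "supp (x i) \<noteq> {}" unfolding supp_def by (auto simp: fun_eq_iff)
  define c where "c = Min (supp (x i))"
  define d where "d = Max (supp (x i))"
  have range: "c \<in> supp (x i)" "d \<in> supp (x i)" "supp (x i) \<subseteq> {c..d}"
    unfolding c_def d_def using fin \<open>supp (x i) \<noteq> {}\<close> by auto
  have restr_isolates: "ip (interval_restr c d f) y = a i * ip f (x i)" for f
  proof -
    have "ip (interval_restr c d f) (x i') = 0" if "i' \<noteq> i" for i'
    proof -
      have "l \<notin> {c..d}" if "l \<in> supp (x i')" for l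
        using blk_chain_less[OF blocks, of i' i l c] blk_chain_less[OF blocks, of i i' d l] range
          \<open>i' \<noteq> i\<close> that by (cases "i' < i") auto
      then show ?thesis unfolding ip_def interval_restr_def by (intro sum.neutral) auto
    qed
    moreover have "ip (interval_restr c d f) (x i) = ip f (x i)"
      unfolding ip_def interval_restr_def using range by (intro sum.cong) auto
    ultimately show ?thesis
      unfolding y_def ip_sum[OF fin] using \<open>i \<le> n\<close> by (subst sum.remove[of _ i]) auto
  qed
  have "\<bar>a i\<bar> * \<bar>ip f (x i)\<bar> \<le> normW \<Omega>1 \<sigma> y" if "f \<in> W0 \<Omega>1 \<sigma>" for f
    using interval_restr_W0[OF that, of c d]
  proof
    assume "interval_restr c d f = (\<lambda>_. 0)"
    then have "a i * ip f (x i) = 0" using restr_isolates[of f] by (simp add: ip_def)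
    then have "\<bar>a i\<bar> * \<bar>ip f (x i)\<bar> = 0" by (metis abs_mult abs_zero)
    then show ?thesis using normW_nonneg[OF fin_y, of \<Omega>1 \<sigma>] by linarith
  next
    assume "interval_restr c d f \<in> W0 \<Omega>1 \<sigma>"
    then have "\<bar>ip (interval_restr c d f) y\<bar> \<le> normW \<Omega>1 \<sigma> y" by (rule abs_ip_le_normW[OF fin_y])
    then show ?thesis using restr_isolates[of f] by (simp add: abs_mult)
  qed
  then have "\<bar>ip f (x i)\<bar> \<le> normW \<Omega>1 \<sigma> y / \<bar>a i\<bar>" if "f \<in> W0 \<Omega>1 \<sigma>" "a i \<noteq> 0" for f
    using that by (simp add: le_divide_eq mult.commute)
  then show ?thesis
    using normW_le[of \<Omega>1 \<sigma> "x i" "normW \<Omega>1 \<sigma> y / \<bar>a i\<bar>"] normW_nonneg[OF fin_y]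
    by (cases "a i = 0") (auto simp: y_def le_divide_eq mult.commute)
qed

lemma sum_atMost_le_one_plus_sum:
  fixes v e :: "nat \<Rightarrow> real"
  assumes "t \<le> n" "\<forall>i<t. v i \<le> e i" "v t \<le> 1" "\<forall>k. t \<le> k \<longrightarrow> k < n \<longrightarrow> v (Suc k) \<le> e k"
  shows "(\<Sum>i\<le>n. v i) \<le> 1 + (\<Sum>k<n. e k)"
  using assms
proof (induction n)
  case (Suc n)
  show ?case
  proof (cases "t = Suc n")
    case True
    then have "(\<Sum>i<Suc n. v i) \<le> (\<Sum>i<Suc n. e i)" using Suc.prems by (intro sum_mono) auto
    then show ?thesis using True Suc.prems(3) by (simp add: lessThan_Suc_atMost[symmetric])
  next
    case False
    then have "(\<Sum>i\<le>n. v i) \<le> 1 + (\<Sum>k<n. e k)" using Suc by auto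
    moreover have "v (Suc n) \<le> e n" using Suc.prems(1,4) False by auto
    ultimately show ?thesis by simp
  qed
qed simp

lemma mono_threshold_index:
  fixes j :: "nat \<Rightarrow> nat"
  assumes "mono j"
  obtains t where "t \<le> n" "\<forall>i<t. j i \<le> c" "\<forall>k. t \<le> k \<longrightarrow> k < n \<longrightarrow> c < j k"
proof -
  let ?t = "LEAST i. c < j i \<or> i = n"
  have "?t \<le> n" by (rule Least_le) simp
  moreover have "j i \<le> c" if "i < ?t" for i
    using not_less_Least[OF that] by simp
  moreover have "c < j k" if "?t \<le> k" "k < n" for k
  proof -
    have "c < j ?t \<or> ?t = n" by (rule LeastI[of _ n]) simp
    then have "c < j ?t" using that by auto
    also have "j ?t \<le> j k" using monoD[OF assms that(1)] .
    finally show ?thesis .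
  qed
  ultimately show ?thesis using that by blast
qed

lemma sum_abs_ip_block_le:
  fixes x :: "nat \<Rightarrow> nat \<Rightarrow> real"
  assumes f: "f \<in> W0 \<Omega>1 \<sigma>" and "mono j"
    and fin: "\<forall>k. finite (supp (x k))" and norm1: "\<forall>k. normW \<Omega>1 \<sigma> (x k) = 1"
    and supp_small: "\<forall>k. real (card (supp (x k))) / real (mm (j k)) < eps k"
    and normG_small: "\<forall>k. normG (x (Suc k)) \<le> eps k / real (nn (j k))"
  shows "(\<Sum>i\<le>n. \<bar>ip f (x i)\<bar>) \<le> 1 + (\<Sum>k<n. eps k)"
proof -
  have le1: "\<bar>ip f (x i)\<bar> \<le> 1" for i using abs_ip_le_normW[OF _ f] fin norm1 by metis
  have eps_nonneg: "0 \<le> eps k" for k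
  proof -
    have "0 \<le> eps k / real (nn (j k))"
      using normG_nonneg[of "x (Suc k)"] fin normG_small by (meson order_trans)
    then show ?thesis using nn_pos[of "j k"] by (simp add: zero_le_divide_iff)
  qed
  from f show ?thesis
  proof (cases rule: W0_cases)
    case 1
    have "\<bar>ip f (x (Suc k))\<bar> \<le> eps k" for k
    proof -
      have "\<bar>ip f (x (Suc k))\<bar> \<le> normG (x (Suc k))" using abs_ip_le_normG[OF _ 1] fin by blast
      also have "\<dots> \<le> eps k / real (nn (j k))" using normG_small by blast
      also have "\<dots> \<le> eps k"
        using divide_left_mono[of 1 "real (nn (j k))" "eps k"] eps_nonneg[of k] nn_pos[of "j k"] by simp
      finally show ?thesis .
    qed
    then show ?thesis using le1 by (intro sum_atMost_le_one_plus_sum[of 0]) auto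
  next
    case (2 \<epsilon> a b J fs)
    obtain t where "t \<le> n" and before: "\<forall>i<t. j i \<le> 2*J+1"
      and after: "\<forall>k. t \<le> k \<longrightarrow> k < n \<longrightarrow> 2*J+1 < j k"
      using mono_threshold_index[OF \<open>mono j\<close>] by blast
    show ?thesis
    proof (rule sum_atMost_le_one_plus_sum[OF \<open>t \<le> n\<close> _ le1], safe)
      fix i assume "i < t"
      have "\<bar>ip f (x i)\<bar> \<le> real (card (supp (x i))) / real (mm (2*J+1))"
        using abs_ip_special_le_card[OF 2(4,2) fin[rule_format, of i]] norm1 2(1) by simp
      also have "\<dots> \<le> real (card (supp (x i))) / real (mm (j i))"
        using mm_mono[of "j i" "2*J+1"] before \<open>i < t\<close> mm_pos[of "j i"] by (intro divide_left_mono) auto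
      finally show "\<bar>ip f (x i)\<bar> \<le> eps i" using supp_small[rule_format, of i] by linarith
    next
      fix k assume "t \<le> k" "k < n"
      have "\<bar>ip f (x (Suc k))\<bar> \<le> real (nn (2*J+1)) * normG (x (Suc k))"
        using abs_ip_special_le_normG[OF 2(4,2)] fin 2(1) by simp
      also have "\<dots> \<le> real (nn (j k)) * (eps k / real (nn (j k)))"
        using nn_mono[of "2*J+1" "j k"] after \<open>t \<le> k\<close> \<open>k < n\<close> normG_small fin normG_nonneg
        by (intro mult_mono) auto
      also have "\<dots> = eps k" using nn_pos[of "j k"] by simp
      finally show "\<bar>ip f (x (Suc k))\<bar> \<le> eps k" .
    qed
  qed
qed

lemma normW_block_sum_le:
  fixes x :: "nat \<Rightarrow> nat \<Rightarrow> real"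
  assumes "mono j"
    and fin: "\<forall>k. finite (supp (x k))" and "\<forall>k. normW \<Omega>1 \<sigma> (x k) = 1"
    and "\<forall>k. real (card (supp (x k))) / real (mm (j k)) < eps k"
    and "\<forall>k. normG (x (Suc k)) \<le> eps k / real (nn (j k))"
  shows "normW \<Omega>1 \<sigma> (\<lambda>l. \<Sum>i\<le>n. a i * x i l) \<le> (MAX i\<in>{..n}. \<bar>a i\<bar>) * (1 + (\<Sum>k<n. eps k))"
proof (rule normW_le)
  fix f assume f: "f \<in> W0 \<Omega>1 \<sigma>"
  let ?M = "MAX i\<in>{..n}. \<bar>a i\<bar>"
  have "\<bar>ip f (\<lambda>l. \<Sum>i\<le>n. a i * x i l)\<bar> \<le> (\<Sum>i\<le>n. \<bar>a i * ip f (x i)\<bar>)"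
    unfolding ip_sum[OF fin] by (rule sum_abs)
  also have "\<dots> \<le> (\<Sum>i\<le>n. ?M * \<bar>ip f (x i)\<bar>)"
    by (intro sum_mono) (simp add: abs_mult mult_right_mono)
  also have "\<dots> \<le> ?M * (1 + (\<Sum>k<n. eps k))"
  proof -
    have "\<bar>a 0\<bar> \<le> ?M" by (rule Max_ge) auto
    then have "0 \<le> ?M" by (rule order_trans[OF abs_ge_zero])
    then show ?thesis
      unfolding sum_distrib_left[symmetric] by (rule mult_left_mono[OF sum_abs_ip_block_le[OF f assms]])
  qed
  finally show "\<bar>ip f (\<lambda>l. \<Sum>i\<le>n. a i * x i l)\<bar> \<le> ?M * (1 + (\<Sum>k<n. eps k))" .
qed

theorem mainTheorem10:
  fixes \<Omega>1 \<Omega>2 :: "nat set" and \<sigma> :: "(nat \<Rightarrow> real) list \<Rightarrow> nat"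
    and \<epsilon> :: real and eps :: "nat \<Rightarrow> real" and j :: "nat \<Rightarrow> nat"
    and x :: "nat \<Rightarrow> nat \<Rightarrow> real"
  assumes "\<Omega>1 \<inter> \<Omega>2 = {}" and "infinite \<Omega>1" and "infinite \<Omega>2"
    and "0 \<notin> \<Omega>1" and "0 \<notin> \<Omega>2"
    and "sigma_ok \<Omega>2 \<sigma>"
    and "\<epsilon> > 0" and "\<forall>k. eps k > 0" and "summable eps" and "suminf eps < \<epsilon>"
    and "strict_mono j" and "\<forall>k. even (j k) \<and> 0 < j k"
    and "\<forall>k. finite (supp (x k)) \<and> x k \<noteq> (\<lambda>_. 0)"
    and "\<forall>k. blk (x k) (x (Suc k))"
    and "\<forall>k. normW \<Omega>1 \<sigma> (x k) = 1"
    and "\<forall>k. real (card (supp (x k))) / real (mm (j k)) < eps k"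
    and "\<forall>k. normG (x (Suc k)) \<le> eps k / real (nn (j k))"
  shows "\<forall>(n::nat) (a::nat \<Rightarrow> real).
           (MAX i\<in>{..n}. \<bar>a i\<bar>) \<le> normW \<Omega>1 \<sigma> (\<lambda>l. \<Sum>i\<le>n. a i * x i l)
         \<and> normW \<Omega>1 \<sigma> (\<lambda>l. \<Sum>i\<le>n. a i * x i l) \<le> (1 + \<epsilon>) * (MAX i\<in>{..n}. \<bar>a i\<bar>)"
proof (intro allI)
  fix n :: nat and a :: "nat \<Rightarrow> real"
  let ?y = "\<lambda>l. \<Sum>i\<le>n. a i * x i l"
  let ?M = "MAX i\<in>{..n}. \<bar>a i\<bar>"
  have fin: "\<forall>k. finite (supp (x k))" using assms(13) by blast
  have "?M \<in> (\<lambda>i. \<bar>a i\<bar>) ` {..n}" by (rule Max_in) auto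
  then obtain i where i: "i \<in> {..n}" "?M = \<bar>a i\<bar>" by (rule imageE)
  have "\<bar>a i\<bar> * normW \<Omega>1 \<sigma> (x i) \<le> normW \<Omega>1 \<sigma> ?y"
    by (rule abs_coeff_le_normW_block_sum[OF assms(14) fin i(1)[unfolded atMost_iff]])
  with assms(15) i(2) have lower: "?M \<le> normW \<Omega>1 \<sigma> ?y" by simp
  have "(\<Sum>k<n. eps k) \<le> suminf eps"
    using assms(8) by (intro sum_le_suminf[OF assms(9)]) (auto intro: less_imp_le)
  with assms(10) have partial_sums: "1 + (\<Sum>k<n. eps k) \<le> 1 + \<epsilon>" by linarith
  have "normW \<Omega>1 \<sigma> ?y \<le> ?M * (1 + (\<Sum>k<n. eps k))"
    by (rule normW_block_sum_le[OF strict_mono_mono[OF assms(11)] fin assms(15-17)])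
  also have "\<dots> \<le> ?M * (1 + \<epsilon>)"
    by (rule mult_left_mono[OF partial_sums]) (simp add: i(2))
  also have "\<dots> = (1 + \<epsilon>) * ?M" by (rule mult.commute)
  finally have upper: "normW \<Omega>1 \<sigma> ?y \<le> (1 + \<epsilon>) * ?M" .
  from lower upper show "?M \<le> normW \<Omega>1 \<sigma> ?y \<and> normW \<Omega>1 \<sigma> ?y \<le> (1 + \<epsilon>) * ?M" ..
qed

end
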